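(* Let $\mathbb{F}$ be a field of characteristic $2$. For every $w\in W^{(2)}$ there is a cycle in $\widetilde H_3(\mathbb{F})$ whose voltage with respect to $\ell$ equals $w$.
   Context: Let $V=\mathbb{F}^4$, $V^*$ its dual. $\widetilde H_3(\mathbb{F})$ is the graph whose vertices are tensors $v\otimes f\in V\otimes V^*$ with $f(v)\neq0$, with $v\otimes f\perp w\otimes g$ iff $f(w)=g(v)=0$. Let $W=\bigwedge^2V$, fix an isomorphism $\chi:\bigwedge^4V\to\mathbb{F}$, identify $\bigwedge^2V^*$ with $(\bigwedge^2V)^*$ via $(f_1\wedge f_2)(v_1\wedge v_2)=f_1(v_1)f_2(v_2)-f_1(v_2)f_2(v_1)$, let $\psi:\bigwedge^2V\to\bigwedge^2V^*$ be $\psi(\hat w)(\hat v)=\chi(\hat v\wedge\hat w)$ and $\phi=\psi^{-1}$. $S_2(W)$ is the symmetric square of $W$ (product $ab$, $a^2=aa$), and $W^{(2)}=\langle\hat w^2:\hat w\in W\rangle$. $\ell$ assigns to the dart from $v_1\otimes h_1$ to $v_2\otimes h_2$ the element $h_1(v_1)^{-1}h_2(v_2)^{-1}(v_1\wedge v_2)\,\phi(h_1\wedge h_2)$ of $S_2(W)$; the voltage of a cycle is the sum of the voltages of its darts. *)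

theory Defs
  imports "HOL-Analysis.Analysis" "HOL-Library.Uprod"
begin

text \<open>Coordinates. V = F^4 is modelled as 'a^4, V* also as 'a^4 with the
standard pairing. Indices of type 4 are 0,1,2,3.\<close>

definition ev :: "'a::field ^ 4 \<Rightarrow> 'a ^ 4 \<Rightarrow> 'a" where
  "ev f v = (\<Sum>i\<in>UNIV. f $ i * v $ i)"

text \<open>Bivectors (elements of the exterior square of V, resp. of V* ) are
modelled as alternating 4x4 matrices: v1 wedge v2 has (i,j)-entry
v1_i v2_j - v1_j v2_i.\<close>

definition alternating :: "'a::field ^ 4 ^ 4 \<Rightarrow> bool" where
  "alternating A \<longleftrightarrow> (\<forall>i. A $ i $ i = 0) \<and> (\<forall>i j. A $ i $ j = - A $ j $ i)"

definition wedge :: "'a::field ^ 4 \<Rightarrow> 'a ^ 4 \<Rightarrow> 'a ^ 4 ^ 4" where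
  "wedge v w = (\<chi> i j. v $ i * w $ j - v $ j * w $ i)"

text \<open>Pairing of the exterior square of V* with the exterior square of V;
on decomposables it gives f1(v1)f2(v2) - f1(v2)f2(v1).\<close>

definition pairing :: "'a::field ^ 4 ^ 4 \<Rightarrow> 'a ^ 4 ^ 4 \<Rightarrow> 'a" where
  "pairing H A = (\<Sum>(i,j)\<in>{(i,j). i < j}. H $ i $ j * A $ i $ j)"

text \<open>Standard coordinate of A wedge C in the top exterior power
(coefficient of e0 e1 e2 e3).\<close>

definition vol :: "'a::field ^ 4 ^ 4 \<Rightarrow> 'a ^ 4 ^ 4 \<Rightarrow> 'a" where
  "vol A C = A$0$1 * C$2$3 - A$0$2 * C$1$3 + A$0$3 * C$1$2
           + A$1$2 * C$0$3 - A$1$3 * C$0$2 + A$2$3 * C$0$1"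

text \<open>Every isomorphism chi from the top exterior power to F is c times the
standard coordinate for some c \<noteq> 0; chi(x) = c * vol.\<close>

definition psi :: "'a::field \<Rightarrow> 'a ^ 4 ^ 4 \<Rightarrow> 'a ^ 4 ^ 4" where
  "psi c W = (THE H. alternating H \<and> (\<forall>A. alternating A \<longrightarrow> pairing H A = c * vol A W))"

definition phi :: "'a::field \<Rightarrow> 'a ^ 4 ^ 4 \<Rightarrow> 'a ^ 4 ^ 4" where
  "phi c H = (THE W. alternating W \<and> psi c W = H)"

text \<open>Symmetric square S_2(W), in coordinates w.r.t. the basis e_i wedge e_j
(i < j) of W: an element is the coefficient function on unordered pairs of basis
indices (monomials). wcoord gives the coordinates of a bivector.\<close>

type_synonym 'a S2 = "(4 \<times> 4) uprod \<Rightarrow> 'a"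

definition wcoord :: "'a::field ^ 4 ^ 4 \<Rightarrow> 4 \<times> 4 \<Rightarrow> 'a" where
  "wcoord A p = (if fst p < snd p then A $ fst p $ snd p else 0)"

definition sprod :: "'a::field ^ 4 ^ 4 \<Rightarrow> 'a ^ 4 ^ 4 \<Rightarrow> 'a S2" where
  "sprod A C u = (\<Sum>(p,q)\<in>{(p,q). Upair p q = u}. wcoord A p * wcoord C q)"

definition W2 :: "'a::field S2 set" where
  "W2 = {w. \<exists>(n::nat) (a::nat \<Rightarrow> 'a) (A::nat \<Rightarrow> 'a ^ 4 ^ 4).
           (\<forall>k<n. alternating (A k)) \<and> w = (\<lambda>u. \<Sum>k<n. a k * sprod (A k) (A k) u)}"

text \<open>The graph H_3(F): a vertex v tensor f is given by a representative
pair (v,f) with f(v) \<noteq> 0.\<close>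

definition is_vertex :: "('a::field ^ 4) \<times> ('a ^ 4) \<Rightarrow> bool" where
  "is_vertex x \<longleftrightarrow> ev (snd x) (fst x) \<noteq> 0"

definition adj :: "('a::field ^ 4) \<times> ('a ^ 4) \<Rightarrow> ('a ^ 4) \<times> ('a ^ 4) \<Rightarrow> bool" where
  "adj x y \<longleftrightarrow> ev (snd x) (fst y) = 0 \<and> ev (snd y) (fst x) = 0"

definition ell :: "'a::field \<Rightarrow> ('a ^ 4) \<times> ('a ^ 4) \<Rightarrow> ('a ^ 4) \<times> ('a ^ 4) \<Rightarrow> 'a S2" where
  "ell c x y = (\<lambda>u. inverse (ev (snd x) (fst x)) * inverse (ev (snd y) (fst y))
       * sprod (wedge (fst x) (fst y)) (phi c (wedge (snd x) (snd y))) u)"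

definition closed_walk :: "(('a::field ^ 4) \<times> ('a ^ 4)) list \<Rightarrow> bool" where
  "closed_walk xs \<longleftrightarrow> xs \<noteq> [] \<and> (\<forall>x\<in>set xs. is_vertex x)
     \<and> (\<forall>i<length xs. adj (xs ! i) (xs ! ((i + 1) mod length xs)))"

definition voltage :: "'a::field \<Rightarrow> (('a ^ 4) \<times> ('a ^ 4)) list \<Rightarrow> 'a S2" where
  "voltage c xs = (\<lambda>u. \<Sum>i<length xs. ell c (xs ! i) (xs ! ((i + 1) mod length xs)) u)"

end

theory Submission
  imports Defs
begin

text \<open>In characteristic 2 the cross terms of a square cancel: the square of
\<open>\<Sum>p. a\<^sub>p e\<^sub>p\<close> is \<open>\<Sum>p. a\<^sub>p\<^sup>2 e\<^sub>p\<^sup>2\<close>, where \<open>e\<^sub>p = e\<^sub>i \<and> e\<^sub>j\<close> (\<open>i < j\<close>) runs over the six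
basis bivectors. Hence every element of W^(2) is a combination \<open>\<Sum>p. w\<^sub>p e\<^sub>p\<^sup>2\<close>. For each
\<open>p\<close> and each scalar \<open>t\<close> an explicit 4-cycle through the vertex \<open>e\<^sub>3 \<otimes> e\<^sub>3\<^sup>*\<close> has voltage
\<open>(t/c) e\<^sub>p\<^sup>2\<close>; closed walks through a common vertex concatenate with their voltages adding
up, so the six cycles with \<open>t = c w\<^sub>p\<close> together have voltage \<open>w\<close>.\<close>

lemma exhaust_4_from_0: "(x::4) = 0 \<or> x = 1 \<or> x = 2 \<or> x = 3"
  using exhaust_4[of x] by auto

lemma forall_4_from_0: "(\<forall>i::4. P i) \<longleftrightarrow> P 0 \<and> P 1 \<and> P 2 \<and> P 3"
  using exhaust_4_from_0 by metis

lemma less_4_simps [simp]: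
  "(0::4) < 1" "(0::4) < 2" "(0::4) < 3" "(1::4) < 2" "(1::4) < 3" "(2::4) < 3"
  "\<not> (1::4) < 0" "\<not> (2::4) < 0" "\<not> (3::4) < 0" "\<not> (2::4) < 1" "\<not> (3::4) < 1" "\<not> (3::4) < 2"
  by (simp_all add: less_bit0_def bit0.Rep_numeral bit0.Rep_0 bit0.Rep_1)

lemma sum_UNIV_4: "sum f (UNIV::4 set) = f 0 + f 1 + f 2 + f 3"
proof -
  have "(4::4) = 0" by simp
  then show ?thesis using sum_4[of f] by (simp only:) (simp add: ac_simps)
qed

lemma less_pairs_4: "{(i, j). (i::4) < j} = {(0,1), (0,2), (0,3), (1,2), (1,3), (2,3)}"
proof -
  have "i < j \<longleftrightarrow> (i, j) \<in> {(0,1), (0,2), (0,3), (1,2), (1,3), (2,3)}" for i j :: 4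
    using exhaust_4_from_0[of i] exhaust_4_from_0[of j] by (elim disjE) simp_all
  then show ?thesis by auto
qed

definition basis_pairs :: "(4 \<times> 4) list" where
  "basis_pairs = [(0,1), (0,2), (0,3), (1,2), (1,3), (2,3)]"

lemma distinct_basis_pairs: "distinct basis_pairs"
  by (simp add: basis_pairs_def)

lemma set_basis_pairs: "set basis_pairs = {p. fst p < snd p}"
proof -
  have "{p. fst p < snd p} = {(i, j). (i::4) < j}" by auto
  then show ?thesis by (simp add: basis_pairs_def less_pairs_4)
qed

lemma less_pair_4_cases:
  assumes "fst p < snd (p :: 4 \<times> 4)"
  shows "p = (0,1) \<or> p = (0,2) \<or> p = (0,3) \<or> p = (1,2) \<or> p = (1,3) \<or> p = (2,3)"
  using assms set_basis_pairs by (auto simp: basis_pairs_def)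

lemma ev_4: "ev f v = f$0 * v$0 + f$1 * v$1 + f$2 * v$2 + f$3 * v$3"
  by (simp add: ev_def sum_UNIV_4)

lemma pairing_4:
  "pairing H A = H$0$1 * A$0$1 + H$0$2 * A$0$2 + H$0$3 * A$0$3
               + H$1$2 * A$1$2 + H$1$3 * A$1$3 + H$2$3 * A$2$3"
  unfolding pairing_def less_pairs_4 by (simp add: ac_simps)

lemma alternating_entries:
  assumes "alternating A"
  shows "A$0$0 = 0" "A$1$1 = 0" "A$2$2 = 0" "A$3$3 = 0"
    "A$1$0 = - A$0$1" "A$2$0 = - A$0$2" "A$3$0 = - A$0$3"
    "A$2$1 = - A$1$2" "A$3$1 = - A$1$3" "A$3$2 = - A$2$3"
  using assms unfolding alternating_def by metis+

lemma wedge_nth [simp]: "wedge v w $ i $ j = v $ i * w $ j - v $ j * w $ i"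
  by (simp add: wedge_def)

lemma alternating_wedge: "alternating (wedge v w)"
  unfolding alternating_def by simp

lemma pairing_wedge_axis:
  assumes "alternating H"
  shows "pairing H (wedge (axis i 1) (axis j 1)) = H $ i $ j"
  using alternating_entries[OF assms] exhaust_4_from_0[of i] exhaust_4_from_0[of j]
  by (auto simp: pairing_4 axis_def)

definition hodge :: "'a::field \<Rightarrow> 'a ^ 4 ^ 4 \<Rightarrow> 'a ^ 4 ^ 4" where
  "hodge c W = (\<chi> i j. c * vol (wedge (axis i 1) (axis j 1)) W)"

lemma hodge_nth [simp]:
  "hodge c W $0$1 = c * W$2$3" "hodge c W $0$2 = - (c * W$1$3)" "hodge c W $0$3 = c * W$1$2"
  "hodge c W $1$2 = c * W$0$3" "hodge c W $1$3 = - (c * W$0$2)" "hodge c W $2$3 = c * W$0$1"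
  by (simp_all add: hodge_def vol_def axis_def)

lemma alternating_hodge: "alternating (hodge c W)"
  unfolding alternating_def hodge_def by (simp add: vol_def algebra_simps)

lemma hodge_hodge:
  assumes "alternating W" and "c \<noteq> 0"
  shows "hodge (inverse c) (hodge c W) = W"
  using alternating_entries[OF assms(1)] assms(2)
  by (simp add: vec_eq_iff forall_4_from_0 hodge_def vol_def axis_def)

lemma psi_eq_hodge: "psi c W = hodge c W"
  unfolding psi_def
proof (rule the_equality)
  show "alternating (hodge c W) \<and> (\<forall>A. alternating A \<longrightarrow> pairing (hodge c W) A = c * vol A W)"
    by (simp add: alternating_hodge pairing_4 vol_def algebra_simps)
next
  fix H assume "alternating H \<and> (\<forall>A. alternating A \<longrightarrow> pairing H A = c * vol A W)"
  then have H: "alternating H" "\<forall>A. alternating A \<longrightarrow> pairing H A = c * vol A W" by auto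
  have "H $ i $ j = hodge c W $ i $ j" for i j
  proof -
    have "H $ i $ j = pairing H (wedge (axis i 1) (axis j 1))"
      using pairing_wedge_axis[of H i j] H by simp
    also have "\<dots> = c * vol (wedge (axis i 1) (axis j 1)) W"
      using H(2) alternating_wedge by blast
    finally show ?thesis by (simp add: hodge_def)
  qed
  then show "H = hodge c W" by (simp add: vec_eq_iff)
qed

lemma phi_eq_hodge:
  assumes "alternating H" and "c \<noteq> 0"
  shows "phi c H = hodge (inverse c) H"
  unfolding phi_def psi_eq_hodge
proof (rule the_equality)
  show "alternating (hodge (inverse c) H) \<and> hodge c (hodge (inverse c) H) = H"
    using hodge_hodge[OF assms(1), of "inverse c"] assms(2) by (simp add: alternating_hodge)
next
  fix W assume "alternating W \<and> hodge c W = H"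
  then show "W = hodge (inverse c) H" using hodge_hodge[of W c] assms(2) by auto
qed

lemma sprod_Upair:
  "sprod A C (Upair p q) =
    (if p = q then wcoord A p * wcoord C p else wcoord A p * wcoord C q + wcoord A q * wcoord C p)"
proof -
  have "{(p', q'). Upair p' q' = Upair p q} = {(p, q), (q, p)}" by auto
  then show ?thesis unfolding sprod_def by auto
qed

lemma sprod_off_basis:
  assumes "\<not> fst p < snd p"
  shows "sprod A C (Upair p q) = 0"
  using assms by (auto simp: sprod_Upair wcoord_def)

lemma sprod_self_off_diagonal:
  assumes "CHAR('a) = 2" and "p \<noteq> q"
  shows "sprod (A :: 'a::field ^ 4 ^ 4) A (Upair p q) = 0"
proof -
  let ?x = "wcoord A p * wcoord A q"
  have "sprod A A (Upair p q) = ?x + ?x"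
    using assms(2) by (simp add: sprod_Upair mult.commute)
  also have "\<dots> = ?x - ?x"
    by (rule minus_CHAR_2[OF assms(1), symmetric])
  finally show ?thesis by simp
qed

lemma S2_eqI:
  fixes f g :: "'a::field S2"
  assumes "\<And>p q. \<not> fst p < snd p \<Longrightarrow> f (Upair p q) = 0 \<and> g (Upair p q) = 0"
    and "\<And>p q. fst p < snd p \<Longrightarrow> fst q < snd q \<Longrightarrow> f (Upair p q) = g (Upair p q)"
  shows "f = g"
proof
  fix u :: "(4 \<times> 4) uprod"
  obtain p q where u: "u = Upair p q" by (cases u)
  have "Upair p q = Upair q p" by auto
  then show "f u = g u" unfolding u using assms by metis
qed

definition basis_square :: "4 \<times> 4 \<Rightarrow> 'a::field S2" where
  "basis_square p u = (if u = Upair p p then 1 else 0)"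

lemma W2_vanishes_off_squares:
  assumes "CHAR('a) = 2" and "w \<in> W2" and "\<forall>p. fst p < snd p \<longrightarrow> u \<noteq> Upair p p"
  shows "w u = (0 :: 'a::field)"
proof -
  obtain n a A where w: "w = (\<lambda>u. \<Sum>k<(n::nat). a k * sprod (A k) (A k) u)"
    using assms(2) unfolding W2_def by blast
  obtain p q where u: "u = Upair p q" by (cases u)
  have "sprod (A k) (A k) u = 0" for k
  proof (cases "p = q")
    case True
    then have "\<not> fst p < snd p" using assms(3) u by (cases p) auto
    then show ?thesis unfolding u by (rule sprod_off_basis)
  next
    case False
    then show ?thesis unfolding u by (rule sprod_self_off_diagonal[OF assms(1)])
  qed
  then show ?thesis by (simp add: w)
qed

lemma W2_eq_sum_basis_squares:
  assumes "CHAR('a) = 2" and "w \<in> W2"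
  shows "w = (\<lambda>u. \<Sum>p | fst p < snd p. w (Upair p p) * basis_square p u :: 'a::field)"
proof
  fix u
  show "w u = (\<Sum>p | fst p < snd p. w (Upair p p) * basis_square p u)"
  proof (cases "\<exists>p. fst p < snd p \<and> u = Upair p p")
    case True
    then obtain p0 where "fst p0 < snd p0" and u: "u = Upair p0 p0" by blast
    have "(\<Sum>p | fst p < snd p. w (Upair p p) * basis_square p u) =
        (\<Sum>p | fst p < snd p. if p = p0 then w u else 0)"
      using u by (intro sum.cong) (auto simp: basis_square_def)
    then show ?thesis using \<open>fst p0 < snd p0\<close> by simp
  next
    case False
    then have "w u = 0" using W2_vanishes_off_squares[OF assms] by blast
    moreover have "(\<Sum>p | fst p < snd p. w (Upair p p) * basis_square p u) = 0"
      using False by (intro sum.neutral) (auto simp: basis_square_def)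
    ultimately show ?thesis by simp
  qed
qed

definition darts :: "'b list \<Rightarrow> ('b \<times> 'b) list" where
  "darts xs = zip xs (rotate1 xs)"

lemma nth_darts:
  assumes "i < length xs"
  shows "darts xs ! i = (xs ! i, xs ! ((i + 1) mod length xs))"
  using assms by (simp add: darts_def nth_rotate1)

lemma rotate1_append_same_hd:
  assumes "xs \<noteq> []" and "ys \<noteq> []" and "hd xs = hd ys"
  shows "rotate1 (xs @ ys) = rotate1 xs @ rotate1 ys"
  using assms by (cases xs; cases ys) auto

lemma darts_append:
  assumes "xs \<noteq> []" and "ys \<noteq> []" and "hd xs = hd ys"
  shows "darts (xs @ ys) = darts xs @ darts ys"
  using rotate1_append_same_hd[OF assms] by (simp add: darts_def)

lemma darts_concat:
  assumes "\<forall>xs \<in> set xss. xs \<noteq> [] \<and> hd xs = b"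
  shows "darts (concat xss) = concat (map darts xss)"
  using assms
proof (induction xss)
  case Nil
  then show ?case by (simp add: darts_def)
next
  case (Cons xs xss)
  show ?case
  proof (cases "concat xss = []")
    case True
    then have "xss = []" using Cons.prems by auto
    then show ?thesis by (simp add: darts_def)
  next
    case False
    then have "hd (concat xss) = b" using Cons.prems by (induction xss) auto
    then have "darts (xs @ concat xss) = darts xs @ darts (concat xss)"
      using Cons.prems False by (intro darts_append) auto
    then show ?thesis using Cons by simp
  qed
qed

lemma closed_walk_darts:
  "closed_walk xs \<longleftrightarrow>
    xs \<noteq> [] \<and> (\<forall>x \<in> set xs. is_vertex x) \<and> (\<forall>(x, y) \<in> set (darts xs). adj x y)"
proof -
  have "length (darts xs) = length xs" by (simp add: darts_def)
  then have "(\<forall>(x, y) \<in> set (darts xs). adj x y) \<longleftrightarrow>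
      (\<forall>i < length xs. adj (xs ! i) (xs ! ((i + 1) mod length xs)))"
    by (simp add: all_set_conv_all_nth nth_darts)
  then show ?thesis by (simp add: closed_walk_def)
qed

lemma voltage_darts: "voltage c xs = (\<lambda>u. \<Sum>(x, y) \<leftarrow> darts xs. ell c x y u)"
proof
  fix u
  have "(\<Sum>(x, y) \<leftarrow> darts xs. ell c x y u) =
      (\<Sum>i<length xs. case darts xs ! i of (x, y) \<Rightarrow> ell c x y u)"
    by (simp add: sum_list_sum_nth atLeast0LessThan darts_def)
  then show "voltage c xs u = (\<Sum>(x, y) \<leftarrow> darts xs. ell c x y u)"
    by (simp add: voltage_def nth_darts)
qed

lemma closed_walk_concat:
  assumes "xss \<noteq> []" and "\<forall>xs \<in> set xss. closed_walk xs \<and> hd xs = b"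
  shows "closed_walk (concat xss)"
proof -
  have heads: "\<forall>xs \<in> set xss. xs \<noteq> [] \<and> hd xs = b"
    using assms(2) by (auto simp: closed_walk_def)
  have "concat xss \<noteq> []"
    using assms(1) heads by (cases xss) auto
  moreover have "\<forall>x \<in> set (concat xss). is_vertex x"
    using assms(2) by (auto simp: closed_walk_def)
  moreover have "\<forall>(x, y) \<in> set (darts (concat xss)). adj x y"
    using assms(2) unfolding darts_concat[OF heads] closed_walk_darts by fastforce
  ultimately show ?thesis by (simp add: closed_walk_darts)
qed

lemma sum_list_map_concat: "sum_list (map f (concat xss)) = (\<Sum>xs \<leftarrow> xss. sum_list (map f xs))"
  by (induction xss) simp_all

lemma voltage_concat:
  assumes "\<forall>xs \<in> set xss. xs \<noteq> [] \<and> hd xs = b"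
  shows "voltage c (concat xss) = (\<lambda>u. \<Sum>xs \<leftarrow> xss. voltage c xs u)"
  by (simp add: voltage_darts darts_concat[OF assms] sum_list_map_concat o_def)

lemma voltage_off_basis:
  assumes "\<not> fst p < snd p"
  shows "voltage c xs (Upair p q) = 0"
  using assms by (simp add: voltage_def ell_def sprod_off_basis)

definition vec4 :: "'a \<Rightarrow> 'a \<Rightarrow> 'a \<Rightarrow> 'a \<Rightarrow> 'a ^ 4" where
  "vec4 a b c d = (\<chi> i. if i = 0 then a else if i = 1 then b else if i = 2 then c else d)"

lemma vec4_nth [simp]:
  "vec4 a b c d $ 0 = a" "vec4 a b c d $ 1 = b" "vec4 a b c d $ 2 = c" "vec4 a b c d $ 3 = d"
  by (simp_all add: vec4_def)

text \<open>After \<open>e\<^sub>3 \<otimes> e\<^sub>3\<^sup>*\<close> and \<open>e\<^sub>2 \<otimes> e\<^sub>2\<^sup>*\<close>, the last two vertices are chosen so that in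
characteristic 2 every contribution of the four darts other than \<open>(t/c) e\<^sub>p\<^sup>2\<close> cancels.\<close>

definition square_cycle :: "4 \<times> 4 \<Rightarrow> 'a::field \<Rightarrow> (('a ^ 4) \<times> ('a ^ 4)) list" where
  "square_cycle p t = [(vec4 0 0 0 1, vec4 0 0 0 1), (vec4 0 0 1 0, vec4 0 0 1 0)] @
    (if p = (0,1) then [(vec4 0 1 0 0, vec4 0 1 0 1), (vec4 1 0 0 0, vec4 1 0 t 0)]
     else if p = (0,2) then [(vec4 1 0 0 0, vec4 1 0 0 1), (vec4 0 0 1 0, vec4 0 t 1 0)]
     else if p = (0,3) then [(vec4 0 0 0 1, vec4 0 1 0 1), (vec4 1 0 0 0, vec4 1 0 t 0)]
     else if p = (1,2) then [(vec4 0 1 0 0, vec4 0 1 0 1), (vec4 0 0 1 0, vec4 t 0 1 0)]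
     else if p = (1,3) then [(vec4 0 0 0 1, vec4 1 0 0 1), (vec4 0 1 0 0, vec4 0 1 t 0)]
     else [(vec4 0 0 0 1, vec4 0 1 0 1), (vec4 0 0 1 0, vec4 t 0 1 0)])"

lemma hd_square_cycle: "hd (square_cycle p t) = (vec4 0 0 0 1, vec4 0 0 0 1)"
  by (simp add: square_cycle_def)

lemma closed_walk_square_cycle: "closed_walk (square_cycle p t)"
  unfolding closed_walk_darts square_cycle_def
  by (simp add: darts_def is_vertex_def adj_def ev_4)

lemma voltage_square_cycle:
  fixes c t :: "'a::field"
  assumes "CHAR('a) = 2" and "c \<noteq> 0" and "fst p < snd p"
  shows "voltage c (square_cycle p t) = (\<lambda>u. t / c * basis_square p u)"
proof (rule S2_eqI)
  fix p' q' :: "4 \<times> 4"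
  assume "\<not> fst p' < snd p'"
  then show "voltage c (square_cycle p t) (Upair p' q') = 0 \<and> t / c * basis_square p (Upair p' q') = 0"
    using assms(3) by (auto simp: voltage_off_basis basis_square_def)
next
  fix p' q' :: "4 \<times> 4"
  assume p': "fst p' < snd p'" and q': "fst q' < snd q'"
  have "(2::'a) = 0"
    using of_nat_CHAR[where 'a='a] assms(1) by simp
  then show "voltage c (square_cycle p t) (Upair p' q') = t / c * basis_square p (Upair p' q')"
    using less_pair_4_cases[OF assms(3)] less_pair_4_cases[OF p'] less_pair_4_cases[OF q']
    by (elim disjE)
       (simp_all add: square_cycle_def voltage_darts darts_def ell_def ev_4 sprod_Upair wcoord_def
         phi_eq_hodge[OF alternating_wedge assms(2)] uminus_CHAR_2[OF assms(1)] basis_square_def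
         divide_inverse)
qed

theorem lemma3p12:
  fixes c :: "'a::field" and w :: "'a S2"
  assumes "CHAR('a) = 2" and "c \<noteq> 0" and "w \<in> W2"
  shows "\<exists>xs. closed_walk xs \<and> voltage c xs = w"
proof -
  define xss where "xss = map (\<lambda>p. square_cycle p (c * w (Upair p p))) basis_pairs"
  have cycles: "\<forall>xs \<in> set xss. closed_walk xs \<and> hd xs = (vec4 0 0 0 1, vec4 0 0 0 1)"
    by (simp add: xss_def closed_walk_square_cycle hd_square_cycle)
  then have "closed_walk (concat xss)"
    by (intro closed_walk_concat) (simp_all add: xss_def basis_pairs_def)
  moreover have "voltage c (concat xss) = w"
  proof -
    have heads: "\<forall>xs \<in> set xss. xs \<noteq> [] \<and> hd xs = (vec4 0 0 0 1, vec4 0 0 0 1)"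
      using cycles by (simp add: closed_walk_def)
    have "voltage c (concat xss) =
        (\<lambda>u. \<Sum>p | fst p < snd p. voltage c (square_cycle p (c * w (Upair p p))) u)"
      unfolding voltage_concat[OF heads]
      by (simp add: xss_def o_def distinct_basis_pairs sum_list_distinct_conv_sum_set set_basis_pairs)
    also have "\<dots> = (\<lambda>u. \<Sum>p | fst p < snd p. w (Upair p p) * basis_square p u)"
      using assms(2) by (intro ext sum.cong) (simp_all add: voltage_square_cycle[OF assms(1,2)])
    also have "\<dots> = w"
      using W2_eq_sum_basis_squares[OF assms(1,3)] by simp
    finally show ?thesis .
  qed
  ultimately show ?thesis by blast
qed

end
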